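(* Let $G$ be an abelian group that is torsion-free or cyclic of prime order. Let $M$ be a matroid over $G$ and $N$ a sparse paving matroid over $G$, both of the same rank $n$, such that $|E(M)|<|E(N)|-1$. If $0\notin E(N)$, then $M$ is matched to $N$.
   Context: A matroid over $G$ is a matroid $M$ whose finite ground set $E(M)$ is a subset of $G$; all matroids are assumed loopless. A matroid of rank $n$ is paving if every $(n-1)$-element subset of its ground set is independent; it is sparse paving if both it and its dual matroid are paving. For matroids $M,N$ over $G$ with $r(M)=r(N)=n>0$ and bases $\mathcal{M}=\{a_1,\dots,a_n\}$ of $M$ and $\mathcal{N}=\{b_1,\dots,b_n\}$ of $N$, $\mathcal{M}$ is matched to $\mathcal{N}$ if there is a permutation $\pi\in S_n$ with $a_i+b_{\pi(i)}\notin E(M)$ for all $i$. $M$ is matched to $N$ if for every basis $\mathcal{M}$ of $M$ there exists a basis $\mathcal{N}$ of $N$ such that $\mathcal{M}$ is matched to $\mathcal{N}$. *)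

theory Defs
  imports "HOL-Computational_Algebra.Primes"
begin

definition matroid :: "'a set \<Rightarrow> 'a set set \<Rightarrow> bool" where
  "matroid E \<B> \<longleftrightarrow> finite E \<and> \<B> \<noteq> {} \<and> (\<forall>B\<in>\<B>. B \<subseteq> E) \<and>
     (\<forall>B1\<in>\<B>. \<forall>B2\<in>\<B>. \<forall>x\<in>B1 - B2. \<exists>y\<in>B2 - B1. insert y (B1 - {x}) \<in> \<B>)"

definition indep :: "'a set set \<Rightarrow> 'a set \<Rightarrow> bool" where
  "indep \<B> I \<longleftrightarrow> (\<exists>B\<in>\<B>. I \<subseteq> B)"

definition loopless :: "'a set \<Rightarrow> 'a set set \<Rightarrow> bool" where
  "loopless E \<B> \<longleftrightarrow> (\<forall>e\<in>E. indep \<B> {e})"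

definition has_rank :: "'a set set \<Rightarrow> nat \<Rightarrow> bool" where
  "has_rank \<B> n \<longleftrightarrow> (\<forall>B\<in>\<B>. card B = n)"

definition dual_bases :: "'a set \<Rightarrow> 'a set set \<Rightarrow> 'a set set" where
  "dual_bases E \<B> = (\<lambda>B. E - B) ` \<B>"

definition paving :: "'a set \<Rightarrow> 'a set set \<Rightarrow> nat \<Rightarrow> bool" where
  "paving E \<B> n \<longleftrightarrow> (\<forall>S. S \<subseteq> E \<and> card S = n - 1 \<longrightarrow> indep \<B> S)"

definition sparse_paving :: "'a set \<Rightarrow> 'a set set \<Rightarrow> nat \<Rightarrow> bool" where
  "sparse_paving E \<B> n \<longleftrightarrow> paving E \<B> n \<and> paving E (dual_bases E \<B>) (card E - n)"

definition basis_matched :: "'a::ab_group_add set \<Rightarrow> 'a set \<Rightarrow> 'a set \<Rightarrow> bool" where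
  "basis_matched EM BM BN \<longleftrightarrow> (\<exists>\<pi>. bij_betw \<pi> BM BN \<and> (\<forall>a\<in>BM. a + \<pi> a \<notin> EM))"

definition matched :: "'a::ab_group_add set \<Rightarrow> 'a set set \<Rightarrow> 'a set set \<Rightarrow> bool" where
  "matched EM \<B>M \<B>N \<longleftrightarrow> (\<forall>BM\<in>\<B>M. \<exists>BN\<in>\<B>N. basis_matched EM BM BN)"

definition natmul :: "nat \<Rightarrow> 'a::ab_group_add \<Rightarrow> 'a" where
  "natmul k x = ((+) x ^^ k) 0"

definition torsion_free_group :: "'a::ab_group_add itself \<Rightarrow> bool" where
  "torsion_free_group _ \<longleftrightarrow> (\<forall>x::'a. \<forall>k::nat. k > 0 \<and> natmul k x = 0 \<longrightarrow> x = 0)"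

definition cyclic_prime_order_group :: "'a::ab_group_add itself \<Rightarrow> bool" where
  "cyclic_prime_order_group _ \<longleftrightarrow> finite (UNIV :: 'a set) \<and> prime (card (UNIV :: 'a set)) \<and>
     (\<exists>g::'a. \<forall>x. \<exists>k. x = natmul k g)"

end

theory Submission
  imports Defs "HOL-Algebra.Coset"
begin

text \<open>Fix a basis A of M and let S(a) be the set of t \<in> E(N) with a + t \<notin> E(M). For nonempty
  X \<subseteq> A, the elements t \<in> E(N) outside \<Union>S(X) satisfy X + t \<subseteq> E(M), so a
  Cauchy--Davenport inequality, valid in torsion-free groups and in groups of prime order, gives
  |\<Union>S(X)| \<ge> |X| + |E(N)| - |E(M)| - 1 > |X|. By Hall's theorem A has a system of distinct
  representatives \<pi>. If \<pi>(A) is not a basis of N, the surplus provides a \<in> A and c \<in> S(a)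
  outside \<pi>(A), and in a sparse paving matroid replacing \<pi>(a) by c turns the non-basis \<pi>(A)
  into a basis.\<close>

section \<open>Groups without periodic finite subsets\<close>

definition finite_subsets_aperiodic :: "'a::ab_group_add itself \<Rightarrow> bool" where
  "finite_subsets_aperiodic _ \<longleftrightarrow>
     (\<forall>X::'a set. \<forall>d. finite X \<and> X \<noteq> {} \<and> X \<noteq> UNIV \<and> (\<forall>x\<in>X. x + d \<in> X) \<longrightarrow> d = 0)"

lemma natmul_0 [simp]: "natmul 0 x = 0"
  by (simp add: natmul_def)

lemma natmul_Suc: "natmul (Suc k) x = x + natmul k x"
  by (simp add: natmul_def)

lemma natmul_add: "natmul (a + b) x = natmul a x + natmul b x"
  by (induction a) (simp_all add: natmul_Suc add.assoc)

lemma torsion_free_imp_finite_subsets_aperiodic: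
  assumes "torsion_free_group TYPE('a::ab_group_add)"
  shows "finite_subsets_aperiodic TYPE('a)"
  unfolding finite_subsets_aperiodic_def
proof (intro allI impI, elim conjE)
  fix X :: "'a set" and d
  assume fin: "finite X" and "X \<noteq> {}" and stable: "\<forall>x\<in>X. x + d \<in> X"
  then obtain x0 where x0: "x0 \<in> X" by blast
  define orbit where "orbit k = x0 + natmul k d" for k
  have "orbit k \<in> X" for k
  proof (induction k)
    case (Suc k)
    then show ?case using stable by (metis orbit_def natmul_Suc add.commute add.left_commute)
  qed (use x0 in \<open>simp add: orbit_def\<close>)
  then have "\<not> inj orbit"
    using fin by (meson finite_imageD finite_subset image_subsetI infinite_UNIV_nat)
  then obtain a b where "a < b" "orbit a = orbit b"
    using linorder_injI by blast
  moreover have "natmul b d = natmul a d + natmul (b - a) d"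
    using \<open>a < b\<close> by (metis natmul_add le_add_diff_inverse less_imp_le)
  ultimately have "natmul (b - a) d = 0"
    by (simp add: orbit_def)
  then show "d = 0"
    using assms \<open>a < b\<close> unfolding torsion_free_group_def by (metis zero_less_diff)
qed

definition additive_group :: "'a::ab_group_add monoid" where
  "additive_group = \<lparr>carrier = UNIV, mult = (+), one = 0\<rparr>"

lemma group_additive_group: "group (additive_group :: 'a::ab_group_add monoid)"
proof (rule groupI)
  fix x :: 'a
  show "\<exists>y\<in>carrier additive_group. y \<otimes>\<^bsub>additive_group\<^esub> x = \<one>\<^bsub>additive_group\<^esub>"
    by (rule bexI[of _ "- x"]) (simp_all add: additive_group_def)
qed (simp_all add: additive_group_def add.assoc)

lemma subgroup_stabilizer:
  fixes X :: "'a::ab_group_add set"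
  assumes "finite X"
  shows "subgroup {h. \<forall>x\<in>X. x + h \<in> X} additive_group"
proof -
  interpret group "additive_group :: 'a monoid"
    by (rule group_additive_group)
  have "\<forall>x\<in>X. x - h \<in> X" if "\<forall>x\<in>X. x + h \<in> X" for h
  proof -
    have "(\<lambda>x. x + h) ` X = X"
      using that assms by (intro endo_inj_surj) (auto simp: inj_on_def)
    show ?thesis
    proof
      fix x assume "x \<in> X"
      then obtain y where "y \<in> X" "x = y + h"
        using \<open>(\<lambda>x. x + h) ` X = X\<close> by (metis imageE)
      then show "x - h \<in> X" by simp
    qed
  qed
  moreover have "inv\<^bsub>additive_group\<^esub> h = - h" for h :: 'a
    by (rule inv_equality) (simp_all add: additive_group_def)
  ultimately show ?thesis
    by unfold_locales (auto simp: additive_group_def add.assoc[symmetric])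
qed

lemma prime_order_imp_finite_subsets_aperiodic:
  assumes fin: "finite (UNIV :: 'a::ab_group_add set)" and prime: "prime (card (UNIV :: 'a set))"
  shows "finite_subsets_aperiodic TYPE('a)"
  unfolding finite_subsets_aperiodic_def
proof (intro allI impI, elim conjE)
  fix X :: "'a set" and d
  assume "finite X" "X \<noteq> {}" "X \<noteq> UNIV" and stable: "\<forall>x\<in>X. x + d \<in> X"
  define H where "H = {h. \<forall>x\<in>X. x + h \<in> X}"
  have "card H dvd card (UNIV :: 'a set)"
    using group.lagrange[OF group_additive_group subgroup_stabilizer[OF \<open>finite X\<close>]]
    by (metis H_def additive_group_def dvd_triv_right order_def partial_object.select_convs(1))
  then have "card H = 1 \<or> H = UNIV"
    using prime fin by (metis card_subset_eq prime_nat_iff subset_UNIV)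
  moreover have "H \<noteq> UNIV"
  proof
    assume "H = UNIV"
    obtain x0 where "x0 \<in> X" using \<open>X \<noteq> {}\<close> by blast
    then have "x0 + (z - x0) \<in> X" for z
      using \<open>H = UNIV\<close> unfolding H_def by (metis (mono_tags) UNIV_I mem_Collect_eq)
    then show False using \<open>X \<noteq> UNIV\<close> by auto
  qed
  moreover have "{0, d} \<subseteq> H"
    using stable by (auto simp: H_def)
  ultimately show "d = 0"
    using fin by (metis card_1_singletonE insert_subset singletonD)
qed

lemma finite_subsets_aperiodic_if_torsion_free_or_cyclic_prime_order:
  assumes "torsion_free_group TYPE('a::ab_group_add) \<or> cyclic_prime_order_group TYPE('a)"
  shows "finite_subsets_aperiodic TYPE('a)"
  using assms
proof
  assume "cyclic_prime_order_group TYPE('a)"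
  then show ?thesis
    unfolding cyclic_prime_order_group_def by (intro prime_order_imp_finite_subsets_aperiodic) simp_all
qed (rule torsion_free_imp_finite_subsets_aperiodic)

section \<open>The Cauchy--Davenport inequality\<close>

lemma card_davenport_transform:
  fixes X Y :: "'a::ab_group_add set"
  assumes "finite X" "finite Y"
  shows "card (X \<union> (\<lambda>y. y + e) ` Y) + card {y \<in> Y. y + e \<in> X} = card X + card Y"
proof -
  have "X \<inter> (\<lambda>y. y + e) ` Y = (\<lambda>y. y + e) ` {y \<in> Y. y + e \<in> X}"
    by auto
  then have "card (X \<inter> (\<lambda>y. y + e) ` Y) = card {y \<in> Y. y + e \<in> X}"
    by (simp add: card_image)
  moreover have "card ((\<lambda>y. y + e) ` Y) = card Y"
    by (simp add: card_image)
  ultimately show ?thesis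
    using card_Un_Int[of X "(\<lambda>y. y + e) ` Y"] assms by simp
qed

theorem cauchy_davenport:
  fixes X Y Z :: "'a::ab_group_add set"
  assumes aperiodic: "finite_subsets_aperiodic TYPE('a)" and "finite Z" "Z \<noteq> UNIV"
    and "finite X" "finite Y" "X \<noteq> {}" "Y \<noteq> {}" and "\<forall>x\<in>X. \<forall>y\<in>Y. x + y \<in> Z"
  shows "card X + card Y \<le> card Z + 1"
  using assms(4-)
proof (induction "card Y" arbitrary: X Y rule: less_induct)
  case less
  show ?case
  proof (cases "\<exists>x\<in>X. \<exists>y\<in>Y. \<exists>y'\<in>Y. y' + (x - y) \<notin> X")
    case True
    \<comment> \<open>Davenport's e-transform: it keeps the sums inside Z and the sum of the cardinalities,
      but removes y' from Y.\<close>
    then obtain x y y' where "x \<in> X" "y \<in> Y" "y' \<in> Y" "y' + (x - y) \<notin> X"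
      by blast
    define e where "e = x - y"
    define X' where "X' = X \<union> (\<lambda>t. t + e) ` Y"
    define Y' where "Y' = {t \<in> Y. t + e \<in> X}"
    have "y \<in> Y'" "y' \<notin> Y'" "Y' \<subseteq> Y"
      using \<open>x \<in> X\<close> \<open>y \<in> Y\<close> \<open>y' + (x - y) \<notin> X\<close> by (auto simp: Y'_def e_def)
    then have "card Y' < card Y"
      using \<open>y' \<in> Y\<close> less.prems(2) by (metis psubset_card_mono psubsetI)
    moreover have "\<forall>u\<in>X'. \<forall>v\<in>Y'. u + v \<in> Z"
    proof (intro ballI)
      fix u v assume "u \<in> X'" "v \<in> Y'"
      then consider "u \<in> X" | t where "t \<in> Y" "u = t + e"
        by (auto simp: X'_def)
      then show "u + v \<in> Z"
      proof cases
        case 2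
        have "v + e \<in> X"
          using \<open>v \<in> Y'\<close> by (simp add: Y'_def)
        then have "(v + e) + t \<in> Z"
          using less.prems(5) \<open>t \<in> Y\<close> by blast
        moreover have "u + v = (v + e) + t"
          using 2 by (simp add: algebra_simps)
        ultimately show ?thesis by (simp only:)
      qed (use less.prems(5) \<open>v \<in> Y'\<close> in \<open>auto simp: Y'_def\<close>)
    qed
    moreover have "finite X'" "finite Y'" "X' \<noteq> {}" "Y' \<noteq> {}"
      using less.prems(1-3) \<open>y \<in> Y'\<close> by (auto simp: X'_def Y'_def)
    ultimately have "card X' + card Y' \<le> card Z + 1"
      using less.hyps by blast
    then show ?thesis
      using card_davenport_transform[OF less.prems(1,2), of e]
      by (simp add: X'_def Y'_def)
  next
    case False
    then have period: "\<forall>x\<in>X. x + (y' - y) \<in> X" if "y \<in> Y" "y' \<in> Y" for y y'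
      using that by (metis add.commute add_diff_eq diff_add_eq)
    obtain y where "y \<in> Y"
      using less.prems(4) by blast
    have "(\<lambda>x. x + y) ` X \<subseteq> Z"
      using less.prems(5) \<open>y \<in> Y\<close> by blast
    show ?thesis
    proof (cases "Y = {y}")
      case True
      have "card X \<le> card Z"
        using card_mono[OF \<open>finite Z\<close> \<open>(\<lambda>x. x + y) ` X \<subseteq> Z\<close>] by (simp add: card_image)
      then show ?thesis using True by simp
    next
      case False
      then obtain y' where "y' \<in> Y" "y' \<noteq> y"
        using \<open>y \<in> Y\<close> by blast
      have "X \<noteq> UNIV"
      proof
        assume "X = UNIV"
        then have "(z - y) + y \<in> Z" for z
          using \<open>(\<lambda>x. x + y) ` X \<subseteq> Z\<close> by blast
        then show False
          using \<open>Z \<noteq> UNIV\<close> by auto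
      qed
      then have "y' - y = 0"
        using aperiodic period[OF \<open>y \<in> Y\<close> \<open>y' \<in> Y\<close>] less.prems(1,3)
        unfolding finite_subsets_aperiodic_def by blast
      then show ?thesis using \<open>y' \<noteq> y\<close> by simp
    qed
  qed
qed

lemma card_non_sums_lower_bound:
  fixes X E F :: "'a::ab_group_add set"
  assumes aperiodic: "finite_subsets_aperiodic TYPE('a)" and "finite E" "E \<noteq> UNIV"
    and "finite F" "X \<subseteq> E" "X \<noteq> {}"
  shows "card X + card F \<le> card (\<Union>a\<in>X. {t \<in> F. a + t \<notin> E}) + card E + 1"
proof -
  define C where "C = {t \<in> F. \<forall>a\<in>X. a + t \<in> E}"
  define N where "N = (\<Union>a\<in>X. {t \<in> F. a + t \<notin> E})"
  have "finite X" "finite C" "finite N"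
    using \<open>X \<subseteq> E\<close> \<open>finite E\<close> \<open>finite F\<close> by (auto simp: C_def N_def intro: rev_finite_subset)
  moreover have "F = C \<union> N" "C \<inter> N = {}"
    by (auto simp: C_def N_def)
  ultimately have "card F = card C + card N"
    by (simp add: card_Un_disjoint)
  moreover have "card X + card C \<le> card E + 1"
  proof (cases "C = {}")
    case True
    then show ?thesis
      using card_mono[OF \<open>finite E\<close> \<open>X \<subseteq> E\<close>] by simp
  next
    case False
    have "\<forall>x\<in>X. \<forall>t\<in>C. x + t \<in> E"
      by (simp add: C_def)
    then show ?thesis
      using cauchy_davenport[OF aperiodic \<open>finite E\<close> \<open>E \<noteq> UNIV\<close>] \<open>finite X\<close> \<open>finite C\<close> \<open>X \<noteq> {}\<close> False
      by blast
  qed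
  ultimately show ?thesis
    unfolding N_def by linarith
qed

lemma card_lt_card_non_sums:
  fixes X E F :: "'a::ab_group_add set"
  assumes "finite_subsets_aperiodic TYPE('a)" and "finite E" "finite F" "card E < card F - 1"
    and "X \<subseteq> E" "X \<noteq> {}"
  shows "card X < card (\<Union>a\<in>X. {t \<in> F. a + t \<notin> E})"
proof -
  have "E \<noteq> UNIV"
  proof
    assume "E = UNIV"
    then have "card F \<le> card E"
      using \<open>finite E\<close> by (simp add: card_mono)
    then show False
      using \<open>card E < card F - 1\<close> by linarith
  qed
  then show ?thesis
    using card_non_sums_lower_bound[OF assms(1,2) _ assms(3,5,6)] assms(4) by linarith
qed

section \<open>Hall's marriage theorem\<close>

definition hall_condition :: "'a set \<Rightarrow> ('a \<Rightarrow> 'b set) \<Rightarrow> bool" where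
  "hall_condition A S \<longleftrightarrow> (\<forall>X\<subseteq>A. card X \<le> card (\<Union>(S ` X)))"

lemma hall_condition_subset: "hall_condition A S \<Longrightarrow> X \<subseteq> A \<Longrightarrow> hall_condition X S"
  unfolding hall_condition_def by blast

lemma hall_condition_remove_surplus:
  assumes surplus: "\<forall>X. X \<subseteq> A \<and> X \<noteq> {} \<and> X \<noteq> A \<longrightarrow> card X < card (\<Union>(S ` X))"
    and "a \<in> A"
  shows "hall_condition (A - {a}) (\<lambda>x. S x - {b})"
  unfolding hall_condition_def
proof (intro allI impI)
  fix X assume X: "X \<subseteq> A - {a}"
  show "card X \<le> card (\<Union>x\<in>X. S x - {b})"
  proof (cases "X = {}")
    case False
    then have "card X < card (\<Union>(S ` X))"
      using surplus X \<open>a \<in> A\<close> by blast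
    moreover have "(\<Union>x\<in>X. S x - {b}) = \<Union>(S ` X) - {b}"
      by blast
    moreover have "card (\<Union>(S ` X)) - card {b} \<le> card (\<Union>(S ` X) - {b})"
      by (rule diff_card_le_card_Diff) simp
    ultimately show ?thesis
      by simp
  qed simp
qed

lemma hall_condition_remove_critical:
  assumes hall: "hall_condition A S" and fin: "finite A" "\<forall>a\<in>A. finite (S a)"
    and X: "X \<subseteq> A" "card (\<Union>(S ` X)) \<le> card X"
  shows "hall_condition (A - X) (\<lambda>x. S x - \<Union>(S ` X))"
  unfolding hall_condition_def
proof (intro allI impI)
  fix Y assume Y: "Y \<subseteq> A - X"
  have fin_UN: "finite (\<Union>(S ` W))" if "W \<subseteq> A" for W
    using fin that by (intro finite_UN_I) (auto intro: finite_subset)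
  have "(\<Union>x\<in>Y. S x - \<Union>(S ` X)) = \<Union>(S ` (X \<union> Y)) - \<Union>(S ` X)"
    by blast
  then have "card (\<Union>x\<in>Y. S x - \<Union>(S ` X)) = card (\<Union>(S ` (X \<union> Y))) - card (\<Union>(S ` X))"
    using X Y by (simp add: card_Diff_subset fin_UN)
  moreover have "card (X \<union> Y) \<le> card (\<Union>(S ` (X \<union> Y)))"
    using hall X Y unfolding hall_condition_def by (metis Diff_subset Un_subset_iff order_trans)
  moreover have "card (X \<union> Y) = card X + card Y"
    using X Y fin(1) by (intro card_Un_disjoint) (auto intro: finite_subset)
  ultimately show "card Y \<le> card (\<Union>x\<in>Y. S x - \<Union>(S ` X))"
    using X(2) by linarith
qed

theorem hall_marriage:
  assumes "finite A" "\<forall>a\<in>A. finite (S a)" "hall_condition A S"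
  shows "\<exists>f. inj_on f A \<and> (\<forall>a\<in>A. f a \<in> S a)"
  using assms
proof (induction "card A" arbitrary: A S rule: less_induct)
  case less
  note fin = less.prems(1,2) and hall = less.prems(3)
  \<comment> \<open>Halmos--Vaughan: either every nonempty proper subset of A has a surplus, and one
    assignment can be made freely, or some critical subset is matched first.\<close>
  consider "A = {}"
    | "A \<noteq> {}" "\<forall>X. X \<subseteq> A \<and> X \<noteq> {} \<and> X \<noteq> A \<longrightarrow> card X < card (\<Union>(S ` X))"
    | X where "X \<subseteq> A" "X \<noteq> {}" "X \<noteq> A" "card (\<Union>(S ` X)) \<le> card X"
    using not_less by blast
  then show ?case
  proof cases
    case 1
    then show ?thesis by simp
  next
    case surplus: 2
    obtain a where "a \<in> A"
      using surplus(1) by blast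
    have "card {a} \<le> card (\<Union>(S ` {a}))"
      using hall \<open>a \<in> A\<close> unfolding hall_condition_def by blast
    then obtain b where "b \<in> S a"
      by fastforce
    have "card (A - {a}) < card A"
      using \<open>a \<in> A\<close> fin(1) by (rule card_Diff1_less[rotated])
    then have "\<exists>f. inj_on f (A - {a}) \<and> (\<forall>x\<in>A - {a}. f x \<in> S x - {b})"
      using fin hall_condition_remove_surplus[OF surplus(2) \<open>a \<in> A\<close>] by (intro less.hyps) auto
    then obtain f where "inj_on f (A - {a})" "\<forall>x\<in>A - {a}. f x \<in> S x - {b}"
      by blast
    then have "inj_on (f(a := b)) (insert a (A - {a}))" "\<forall>x\<in>A. (f(a := b)) x \<in> S x"
      using \<open>b \<in> S a\<close> by (auto simp: inj_on_def)
    then show ?thesis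
      using \<open>a \<in> A\<close> by (metis insert_Diff)
  next
    case critical: 3
    have "card X < card A"
      using critical fin(1) by (simp add: psubset_card_mono)
    then have "\<exists>f. inj_on f X \<and> (\<forall>x\<in>X. f x \<in> S x)"
      using critical(1) fin hall_condition_subset[OF hall critical(1)]
      by (intro less.hyps) (auto intro: finite_subset)
    then obtain f1 where f1: "inj_on f1 X" "\<forall>x\<in>X. f1 x \<in> S x"
      by blast
    have "card (A - X) < card A"
      using critical fin(1) by (intro psubset_card_mono) auto
    then have "\<exists>f. inj_on f (A - X) \<and> (\<forall>x\<in>A - X. f x \<in> S x - \<Union>(S ` X))"
      using fin hall_condition_remove_critical[OF hall fin critical(1,4)] by (intro less.hyps) auto
    then obtain f2 where f2: "inj_on f2 (A - X)" "\<forall>x\<in>A - X. f2 x \<in> S x - \<Union>(S ` X)"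
      by blast
    define f where "f x = (if x \<in> X then f1 x else f2 x)" for x
    have "inj_on f X" "inj_on f (A - X)"
      using f1(1) f2(1) by (auto simp: f_def inj_on_def)
    moreover have "f ` X \<inter> f ` (A - X) = {}"
      using f1(2) f2(2) by (auto simp: f_def)
    ultimately have "inj_on f (X \<union> (A - X))"
      unfolding inj_on_Un by blast
    moreover have "X \<union> (A - X) = A"
      using critical(1) by blast
    moreover have "\<forall>x\<in>A. f x \<in> S x"
      using f1(2) f2(2) by (simp add: f_def)
    ultimately show ?thesis
      by metis
  qed
qed

section \<open>Transversal bases of sparse paving matroids\<close>

lemma sparse_paving_exchange_non_basis:
  assumes N: "matroid E \<B>" "has_rank \<B> n" "sparse_paving E \<B> n"
    and B: "B \<subseteq> E" "card B = n" "B \<notin> \<B>" and "b \<in> B" "c \<in> E - B"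
  shows "insert c (B - {b}) \<in> \<B>"
proof -
  have "finite E"
    using N(1) by (simp add: matroid_def)
  then have "finite B"
    using B(1) finite_subset by blast
  have "B - {b} \<subseteq> E" "card (B - {b}) = n - 1"
    using B(1,2) \<open>b \<in> B\<close> \<open>finite B\<close> by auto
  then obtain B1 where "B1 \<in> \<B>" "B - {b} \<subseteq> B1"
    using N(3) unfolding sparse_paving_def paving_def indep_def by blast
  moreover have "card B1 = n"
    using N(2) \<open>B1 \<in> \<B>\<close> by (simp add: has_rank_def)
  moreover have "n > 0"
    using B(2) \<open>b \<in> B\<close> \<open>finite B\<close> card_gt_0_iff by blast
  ultimately have "card (B1 - (B - {b})) = 1"
    using \<open>finite B\<close> \<open>card (B - {b}) = n - 1\<close> by (simp add: card_Diff_subset)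
  then obtain e where "B1 - (B - {b}) = {e}"
    by (rule card_1_singletonE)
  then have B1: "B1 = insert e (B - {b})" "e \<notin> B - {b}"
    using \<open>B - {b} \<subseteq> B1\<close> by auto
  have "e \<noteq> b"
    using B1(1) \<open>B1 \<in> \<B>\<close> B(3) \<open>b \<in> B\<close> by (metis insert_Diff)
  have "card (E - insert c B) = card E - n - 1"
    using B(1,2) \<open>c \<in> E - B\<close> \<open>finite B\<close> by (simp add: card_Diff_subset)
  then obtain D where "D \<in> \<B>" "E - insert c B \<subseteq> E - D"
    using N(3) unfolding sparse_paving_def paving_def indep_def dual_bases_def by blast
  then have "D \<subseteq> insert c B"
    using N(1) by (auto simp: matroid_def)
  \<comment> \<open>Exchanging e \<in> B1 - D against D can only bring in c, since D \<subseteq> B + c and B is not a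
    basis.\<close>
  show ?thesis
  proof (cases "e = c")
    case True
    then show ?thesis
      using B1(1) \<open>B1 \<in> \<B>\<close> by simp
  next
    case False
    then have "e \<in> B1 - D"
      using B1 \<open>e \<noteq> b\<close> \<open>D \<subseteq> insert c B\<close> by auto
    then obtain y where "y \<in> D - B1" "insert y (B1 - {e}) \<in> \<B>"
      using N(1) \<open>B1 \<in> \<B>\<close> \<open>D \<in> \<B>\<close> unfolding matroid_def by blast
    moreover have "B1 - {e} = B - {b}"
      using B1 by auto
    moreover have "y \<noteq> b"
      using calculation B(3) \<open>b \<in> B\<close> by (metis insert_Diff)
    ultimately have "y = c"
      using \<open>D \<subseteq> insert c B\<close> B1(1) by auto
    then show ?thesis
      using \<open>insert y (B1 - {e}) \<in> \<B>\<close> \<open>B1 - {e} = B - {b}\<close> by simp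
  qed
qed

lemma sparse_paving_basis_transversal:
  assumes N: "matroid E \<B>" "has_rank \<B> n" "sparse_paving E \<B> n"
    and A: "finite A" "card A = n" and S: "\<forall>a\<in>A. S a \<subseteq> E"
    and surplus: "\<And>X. X \<subseteq> A \<Longrightarrow> X \<noteq> {} \<Longrightarrow> card X < card (\<Union>(S ` X))"
  shows "\<exists>B\<in>\<B>. \<exists>\<pi>. bij_betw \<pi> A B \<and> (\<forall>a\<in>A. \<pi> a \<in> S a)"
proof -
  have "finite E"
    using N(1) by (simp add: matroid_def)
  have "hall_condition A S"
    unfolding hall_condition_def
  proof (intro allI impI)
    fix X assume "X \<subseteq> A"
    then show "card X \<le> card (\<Union>(S ` X))"
      using surplus by (cases "X = {}") (simp_all add: less_imp_le)
  qed
  moreover have "\<forall>a\<in>A. finite (S a)"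
    using S \<open>finite E\<close> by (auto intro: rev_finite_subset)
  ultimately obtain \<pi> where \<pi>: "inj_on \<pi> A" "\<forall>a\<in>A. \<pi> a \<in> S a"
    using hall_marriage[OF A(1)] by blast
  define B where "B = \<pi> ` A"
  have "B \<subseteq> E"
    using \<pi>(2) S by (auto simp: B_def)
  have "card B = n"
    using \<pi>(1) A(2) by (simp add: B_def card_image)
  show ?thesis
  proof (cases "B \<in> \<B>")
    case True
    then show ?thesis
      using \<pi> by (auto simp: B_def bij_betw_def)
  next
    case False
    have "A \<noteq> {}"
    proof
      assume "A = {}"
      obtain D where "D \<in> \<B>"
        using N(1) by (auto simp: matroid_def)
      moreover have "finite D"
        using N(1) \<open>D \<in> \<B>\<close> \<open>finite E\<close> unfolding matroid_def by (blast intro: rev_finite_subset)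
      moreover have "card D = 0"
        using N(2) A(2) \<open>A = {}\<close> \<open>D \<in> \<B>\<close> by (simp add: has_rank_def)
      ultimately have "B \<in> \<B>"
        using \<open>A = {}\<close> by (simp add: B_def)
      then show False
        using False by simp
    qed
    then have "card B < card (\<Union>(S ` A))"
      using surplus[OF order_refl] A(2) \<open>card B = n\<close> by simp
    then have "\<not> \<Union>(S ` A) \<subseteq> B"
      using card_mono[OF finite_subset[OF \<open>B \<subseteq> E\<close> \<open>finite E\<close>]] by (meson not_le)
    then obtain a c where "a \<in> A" "c \<in> S a" "c \<notin> B"
      by blast
    have "c \<in> E - B" "\<pi> a \<in> B"
      using \<open>a \<in> A\<close> \<open>c \<in> S a\<close> \<open>c \<notin> B\<close> S by (auto simp: B_def)
    then have "insert c (B - {\<pi> a}) \<in> \<B>"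
      by (intro sparse_paving_exchange_non_basis[OF N \<open>B \<subseteq> E\<close> \<open>card B = n\<close> False])
    moreover have "bij_betw (\<pi>(a := c)) A (insert c (B - {\<pi> a}))"
      unfolding bij_betw_def
    proof
      show "inj_on (\<pi>(a := c)) A"
        using \<pi>(1) \<open>c \<notin> B\<close> by (intro inj_on_fun_updI) (simp_all add: B_def)
      show "(\<pi>(a := c)) ` A = insert c (B - {\<pi> a})"
        using \<pi>(1) \<open>a \<in> A\<close> by (auto simp: fun_upd_image B_def inj_on_def)
    qed
    moreover have "\<forall>x\<in>A. (\<pi>(a := c)) x \<in> S x"
      using \<pi>(2) \<open>c \<in> S a\<close> by simp
    ultimately show ?thesis
      by blast
  qed
qed

theorem corollary2p4:
  fixes EM EN :: "'a::ab_group_add set" and \<B>M \<B>N :: "'a set set" and n :: nat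
  assumes G: "torsion_free_group TYPE('a) \<or> cyclic_prime_order_group TYPE('a)"
    and M: "matroid EM \<B>M" "loopless EM \<B>M" "has_rank \<B>M n"
    and N: "matroid EN \<B>N" "loopless EN \<B>N" "has_rank \<B>N n" "sparse_paving EN \<B>N n"
    and card: "card EM < card EN - 1"
    and zero: "0 \<notin> EN"
  shows "matched EM \<B>M \<B>N"
  unfolding matched_def
proof
  fix A assume "A \<in> \<B>M"
  then have "A \<subseteq> EM" "card A = n"
    using M(1,3) by (auto simp: matroid_def has_rank_def)
  have "finite EM" "finite EN"
    using M(1) N(1) by (simp_all add: matroid_def)
  then have "finite A"
    using \<open>A \<subseteq> EM\<close> finite_subset by blast
  define S where "S a = {t \<in> EN. a + t \<notin> EM}" for a
  have surplus: "card X < card (\<Union>(S ` X))" if "X \<subseteq> A" "X \<noteq> {}" for X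
    unfolding S_def using that \<open>A \<subseteq> EM\<close>
    by (intro card_lt_card_non_sums[OF finite_subsets_aperiodic_if_torsion_free_or_cyclic_prime_order[OF G]
          \<open>finite EM\<close> \<open>finite EN\<close> card]) auto
  have "\<forall>a\<in>A. S a \<subseteq> EN"
    by (auto simp: S_def)
  then obtain BN \<pi> where "BN \<in> \<B>N" "bij_betw \<pi> A BN" "\<forall>a\<in>A. \<pi> a \<in> S a"
    using sparse_paving_basis_transversal[OF N(1,3,4) \<open>finite A\<close> \<open>card A = n\<close> _ surplus] by blast
  moreover have "\<forall>a\<in>A. a + \<pi> a \<notin> EM"
    using \<open>\<forall>a\<in>A. \<pi> a \<in> S a\<close> by (simp add: S_def)
  ultimately show "\<exists>BN\<in>\<B>N. basis_matched EM A BN"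
    unfolding basis_matched_def by blast
qed

end
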